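(* Under the standing assumptions (A1)–(A6) below, the aNETT regularizer $\mathcal R\colon \mathbb X\to[0,\infty]$, $\mathcal R(x)=\psi(\mathbf E(x))+\frac{c}{2}\|x-\mathbf D(\mathbf E(x))\|^2$, is coercive.
   Context: Standing assumptions (A1)–(A6): (A1) $\mathbb X,\mathbb Y$ are real Hilbert spaces; (A2) $\Xi=\ell^2(\Lambda)$ for a countable index set $\Lambda$; (A3) $\mathbf K\colon\mathbb X\to\mathbb Y$ is (possibly nonlinear and) weakly sequentially continuous; (A4) the encoder $\mathbf E\colon\mathbb X\to\Xi$ is weakly sequentially continuous; (A5) the decoder $\mathbf D\colon\Xi\to\mathbb X$ is weakly sequentially continuous; (A6) $\psi\colon\Xi\to[0,\infty]$ is coercive and weakly sequentially lower semicontinuous. A constant $c>0$ is fixed. A functional $F\colon H\to[0,\infty]$ on a normed space is called coercive if every sequence $(x_n)$ with $(F(x_n))_n$ bounded is itself bounded in norm. *)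

theory Defs
  imports "HOL-Analysis.Analysis" "HOL-Library.Extended_Nonnegative_Real"
begin

definition l2 :: "('l \<Rightarrow> real) set" where
  "l2 = {f. (\<lambda>i. (f i)\<^sup>2) summable_on UNIV}"

definition l2_inner :: "('l \<Rightarrow> real) \<Rightarrow> ('l \<Rightarrow> real) \<Rightarrow> real" where
  "l2_inner f g = infsum (\<lambda>i. f i * g i) UNIV"

definition l2_norm :: "('l \<Rightarrow> real) \<Rightarrow> real" where
  "l2_norm f = sqrt (infsum (\<lambda>i. (f i)\<^sup>2) UNIV)"

definition l2_wconv :: "(nat \<Rightarrow> ('l \<Rightarrow> real)) \<Rightarrow> ('l \<Rightarrow> real) \<Rightarrow> bool" where
  "l2_wconv xs x \<longleftrightarrow> (\<forall>n. xs n \<in> l2) \<and> x \<in> l2 \<and>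
     (\<forall>y\<in>l2. (\<lambda>n. l2_inner (xs n) y) \<longlonglongrightarrow> l2_inner x y)"

definition hwconv :: "(nat \<Rightarrow> 'a::real_inner) \<Rightarrow> 'a \<Rightarrow> bool" where
  "hwconv xs x \<longleftrightarrow> (\<forall>y. (\<lambda>n. inner (xs n) y) \<longlonglongrightarrow> inner x y)"

definition weakly_seq_cont :: "('a::real_inner \<Rightarrow> 'b::real_inner) \<Rightarrow> bool" where
  "weakly_seq_cont f \<longleftrightarrow> (\<forall>xs x. hwconv xs x \<longrightarrow> hwconv (\<lambda>n. f (xs n)) (f x))"

definition weakly_seq_cont_enc :: "('a::real_inner \<Rightarrow> ('l \<Rightarrow> real)) \<Rightarrow> bool" where
  "weakly_seq_cont_enc E \<longleftrightarrow> (\<forall>x. E x \<in> l2) \<and>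
     (\<forall>xs x. hwconv xs x \<longrightarrow> l2_wconv (\<lambda>n. E (xs n)) (E x))"

definition weakly_seq_cont_dec :: "(('l \<Rightarrow> real) \<Rightarrow> 'a::real_inner) \<Rightarrow> bool" where
  "weakly_seq_cont_dec D \<longleftrightarrow> (\<forall>xs x. l2_wconv xs x \<longrightarrow> hwconv (\<lambda>n. D (xs n)) (D x))"

definition coercive_l2 :: "(('l \<Rightarrow> real) \<Rightarrow> ennreal) \<Rightarrow> bool" where
  "coercive_l2 F \<longleftrightarrow> (\<forall>xs::nat \<Rightarrow> ('l \<Rightarrow> real). (\<forall>n. xs n \<in> l2) \<longrightarrow> (\<exists>M::real. \<forall>n. F (xs n) \<le> ennreal M)
       \<longrightarrow> (\<exists>B::real. \<forall>n. l2_norm (xs n) \<le> B))"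

definition coercive :: "('a::real_normed_vector \<Rightarrow> ennreal) \<Rightarrow> bool" where
  "coercive F \<longleftrightarrow> (\<forall>xs::nat \<Rightarrow> 'a. (\<exists>M::real. \<forall>n. F (xs n) \<le> ennreal M)
       \<longrightarrow> (\<exists>B::real. \<forall>n. norm (xs n) \<le> B))"

definition weakly_seq_lsc_l2 :: "(('l \<Rightarrow> real) \<Rightarrow> ennreal) \<Rightarrow> bool" where
  "weakly_seq_lsc_l2 F \<longleftrightarrow> (\<forall>xs x. l2_wconv xs x \<longrightarrow> F x \<le> liminf (\<lambda>n. F (xs n)))"

definition aNETT_reg :: "(('l \<Rightarrow> real) \<Rightarrow> ennreal) \<Rightarrow> ('a::real_normed_vector \<Rightarrow> ('l \<Rightarrow> real))
    \<Rightarrow> (('l \<Rightarrow> real) \<Rightarrow> 'a) \<Rightarrow> real \<Rightarrow> 'a \<Rightarrow> ennreal" where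
  "aNETT_reg \<psi> E D c x = \<psi> (E x) + ennreal (c / 2 * (norm (x - D (E x)))\<^sup>2)"

end

theory Submission
  imports Defs "HOL-Library.Diagonal_Subsequence"
begin

text \<open>
  A bounded value of the regularizer bounds \<open>\<psi> (E x)\<close>, hence (coercivity of \<open>\<psi>\<close>) the codes
  \<open>E x\<close> in \<open>\<ell>\<^sup>2\<close>, and it bounds the residual \<open>\<parallel>x - D (E x)\<parallel>\<close>. It remains to see that the
  decoder maps bounded sets to bounded sets: otherwise some bounded sequence of codes has
  unbounded decodings; by weak sequential compactness of bounded sets in \<open>\<ell>\<^sup>2\<close> it has a
  weakly convergent subsequence, whose decodings converge weakly by (A5) and are therefore
  bounded by the uniform boundedness principle, a contradiction.
\<close>

lemma closed_cover_contains_ball: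
  fixes F :: "nat \<Rightarrow> 'a::{real_normed_vector,complete_space} set"
  assumes closed: "\<And>k. closed (F k)" and cover: "\<Union>(range F) = UNIV"
  shows "\<exists>k x0 r. r > 0 \<and> ball x0 r \<subseteq> F k"
proof -
  have "\<exists>T\<in>range F. \<not> (closedin euclidean T \<and> euclidean interior_of T = {})"
  proof (rule ccontr)
    assume "\<not> ?thesis"
    then have "euclidean interior_of \<Union>(range F) = {}"
      by (intro Baire_category_alt[where X=euclidean] disjI1 completely_metrizable_space_euclidean)
        auto
    then show False using cover by simp
  qed
  then obtain k where "euclidean interior_of (F k) \<noteq> {}"
    using closed closed_closedin by blast
  then obtain x0 where x0: "x0 \<in> euclidean interior_of (F k)" by blast
  have "open (euclidean interior_of (F k))" by (metis open_openin openin_interior_of)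
  then obtain r where "r > 0" "ball x0 r \<subseteq> euclidean interior_of (F k)"
    using x0 open_contains_ball by blast
  then show ?thesis using interior_of_subset[of euclidean "F k"] by blast
qed

theorem uniform_boundedness_inner:
  fixes u :: "'i \<Rightarrow> 'a::{real_inner,complete_space}"
  assumes pointwise_bounded: "\<And>y. \<exists>K. \<forall>n. \<bar>inner (u n) y\<bar> \<le> K"
  shows "\<exists>B. \<forall>n. norm (u n) \<le> B"
proof -
  define F where "F k = {y. \<forall>n. \<bar>inner (u n) y\<bar> \<le> real k}" for k :: nat
  have "closed (F k)" for k
  proof -
    have "F k = (\<Inter>n. {y. \<bar>inner (u n) y\<bar> \<le> real k})" unfolding F_def by auto
    moreover have "closed {y. \<bar>inner (u n) y\<bar> \<le> real k}" for n
      by (intro closed_Collect_le continuous_intros)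
    ultimately show ?thesis by auto
  qed
  moreover have "\<Union>(range F) = UNIV"
  proof -
    have "\<exists>k::nat. y \<in> F k" for y
    proof -
      obtain K where "\<forall>n. \<bar>inner (u n) y\<bar> \<le> K" using pointwise_bounded by blast
      then have "y \<in> F (nat \<lceil>K\<rceil>)"
        unfolding F_def by (auto intro: order.trans[OF _ real_nat_ceiling_ge])
      then show ?thesis ..
    qed
    then show ?thesis by auto
  qed
  ultimately obtain k x0 r where r: "r > 0" and ball: "ball x0 r \<subseteq> F k"
    using closed_cover_contains_ball by blast
  have "norm (u n) \<le> 4 * real k / r" for n
  proof (cases "u n = 0")
    case True
    then show ?thesis using r by simp
  next
    case False
    \<comment> \<open>compare \<open>x0\<close> with \<open>x0 + h\<close>, where \<open>h\<close> has length \<open>r/2\<close> and points along \<open>u n\<close>\<close>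
    define h where "h = (r/2 / norm (u n)) *\<^sub>R u n"
    have "x0 + h \<in> ball x0 r" using False r by (simp add: h_def dist_norm)
    then have "\<bar>inner (u n) (x0 + h)\<bar> \<le> real k" using ball unfolding F_def by blast
    moreover have "\<bar>inner (u n) x0\<bar> \<le> real k"
      using ball centre_in_ball[of x0 r] r unfolding F_def by blast
    moreover have "inner (u n) h = r/2 * norm (u n)"
      using False by (simp add: h_def power2_norm_eq_inner[symmetric] power2_eq_square)
    ultimately have "r/2 * norm (u n) \<le> 2 * real k" by (simp add: inner_add_right)
    then show ?thesis using r by (simp add: field_simps)
  qed
  then show ?thesis by blast
qed

corollary hwconv_imp_bounded:
  fixes u :: "nat \<Rightarrow> 'a::{real_inner,complete_space}"
  assumes "hwconv u v"
  shows "\<exists>B. \<forall>n. norm (u n) \<le> B"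
proof (rule uniform_boundedness_inner)
  fix y
  have "(\<lambda>n. inner (u n) y) \<longlonglongrightarrow> inner v y" using assms unfolding hwconv_def by blast
  then have "Bseq (\<lambda>n. inner (u n) y)" using convergent_def convergent_imp_Bseq by blast
  then show "\<exists>K. \<forall>n. \<bar>inner (u n) y\<bar> \<le> K" unfolding Bseq_def by auto
qed

lemma l2_sq_summable: "f \<in> l2 \<Longrightarrow> (\<lambda>i. (f i)\<^sup>2) summable_on A"
  unfolding l2_def using summable_on_subset by blast

lemma l2_sq_infsum_nonneg: "infsum (\<lambda>i. (f i)\<^sup>2) A \<ge> (0::real)"
  by (rule infsum_nonneg) simp

lemma l2_sq_infsum_mono: "f \<in> l2 \<Longrightarrow> infsum (\<lambda>i. (f i)\<^sup>2) A \<le> infsum (\<lambda>i. (f i)\<^sup>2) UNIV"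
  by (rule infsum_mono2) (auto intro: l2_sq_summable)

lemma l2_coordinate_sq_le: "f \<in> l2 \<Longrightarrow> (f i)\<^sup>2 \<le> infsum (\<lambda>i. (f i)\<^sup>2) UNIV"
  using finite_sum_le_infsum[of "\<lambda>i. (f i)\<^sup>2" UNIV "{i}"] l2_sq_summable[of f UNIV] by simp

lemma l2_norm_le_imp_sq_infsum_le:
  assumes "l2_norm f \<le> B"
  shows "infsum (\<lambda>i. (f i)\<^sup>2) UNIV \<le> B\<^sup>2"
proof -
  have "infsum (\<lambda>i. (f i)\<^sup>2) UNIV = (l2_norm f)\<^sup>2"
    unfolding l2_norm_def using l2_sq_infsum_nonneg[of f UNIV] by simp
  also have "\<dots> \<le> B\<^sup>2"
    using assms l2_sq_infsum_nonneg by (intro power_mono) (auto simp: l2_norm_def)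
  finally show ?thesis .
qed

lemma infsum_split_finite:
  fixes h :: "'l \<Rightarrow> 'a::banach"
  assumes "h summable_on UNIV" "finite F"
  shows "infsum h UNIV = sum h F + infsum h (-F)"
proof -
  have "infsum h (F \<union> -F) = infsum h F + infsum h (-F)"
    by (rule infsum_Un_disjoint) (auto intro: summable_on_subset_banach[OF assms(1)])
  then show ?thesis using assms(2) by simp
qed

lemma l2_tail_small:
  assumes "g \<in> l2" "e > 0"
  shows "\<exists>F. finite F \<and> infsum (\<lambda>i. (g i)\<^sup>2) (-F) \<le> e"
proof -
  let ?h = "\<lambda>i. (g i)\<^sup>2"
  have summable: "?h summable_on UNIV" using assms(1) unfolding l2_def by simp
  then have "\<forall>\<^sub>F F in finite_subsets_at_top UNIV. dist (sum ?h F) (infsum ?h UNIV) < e"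
    using infsum_tendsto assms(2) tendstoD by blast
  then obtain F where F: "finite F" "dist (sum ?h F) (infsum ?h UNIV) < e"
    unfolding eventually_finite_subsets_at_top by blast
  then show ?thesis
    using infsum_split_finite[OF summable F(1)] by (intro exI[of _ F]) (auto simp: dist_real_def)
qed

lemma abs_mult_le_weighted_squares:
  fixes a b t :: real
  assumes "t > 0"
  shows "\<bar>a * b\<bar> \<le> t/2 * a\<^sup>2 + 1/(2*t) * b\<^sup>2"
proof -
  have "2*t*\<bar>a*b\<bar> \<le> t\<^sup>2*a\<^sup>2 + b\<^sup>2"
    using zero_le_power2[of "t*\<bar>a\<bar> - \<bar>b\<bar>"] by (simp add: power2_eq_square abs_mult algebra_simps)
  then show ?thesis using assms by (simp add: field_simps power2_eq_square)
qed

lemma l2_product_summable_and_bound: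
  assumes f: "f \<in> l2" and g: "g \<in> l2" and t: "t > 0"
  shows "(\<lambda>i. f i * g i) summable_on A"
    and "\<bar>infsum (\<lambda>i. f i * g i) A\<bar>
           \<le> t/2 * infsum (\<lambda>i. (f i)\<^sup>2) A + 1/(2*t) * infsum (\<lambda>i. (g i)\<^sup>2) A"
proof -
  define h where "h i = t/2 * (f i)\<^sup>2 + 1/(2*t) * (g i)\<^sup>2" for i
  have summable_f: "(\<lambda>i. t/2 * (f i)\<^sup>2) summable_on A"
    and summable_g: "(\<lambda>i. 1/(2*t) * (g i)\<^sup>2) summable_on A"
    by (intro summable_on_cmult_right l2_sq_summable f g)+
  then have summable_h: "h summable_on A" unfolding h_def by (rule summable_on_add)
  have dominated: "\<bar>f i * g i\<bar> \<le> h i" for i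
    unfolding h_def using abs_mult_le_weighted_squares[OF t] .
  have "(\<lambda>i. norm (f i * g i)) summable_on A"
    by (rule summable_on_comparison_test[OF summable_h]) (use dominated in auto)
  then show summable: "(\<lambda>i. f i * g i) summable_on A"
    using summable_on_iff_abs_summable_on_real by blast
  have "norm (infsum (\<lambda>i. f i * g i) A) \<le> infsum h A"
    using norm_infsum_le[OF has_sum_infsum[OF summable] has_sum_infsum[OF summable_h]] dominated
    by simp
  also have "infsum h A = t/2 * infsum (\<lambda>i. (f i)\<^sup>2) A + 1/(2*t) * infsum (\<lambda>i. (g i)\<^sup>2) A"
    unfolding h_def infsum_add[OF summable_f summable_g]
    by (simp only: infsum_cmult_right')
  finally show "\<bar>infsum (\<lambda>i. f i * g i) A\<bar>
      \<le> t/2 * infsum (\<lambda>i. (f i)\<^sup>2) A + 1/(2*t) * infsum (\<lambda>i. (g i)\<^sup>2) A" by simp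
qed

lemma l2_inner_tail_less:
  assumes f: "f \<in> l2" and y: "y \<in> l2" and f_bound: "infsum (\<lambda>i. (f i)\<^sup>2) UNIV \<le> C"
    and C: "C \<ge> 0" and e: "e > 0"
    and y_tail: "infsum (\<lambda>i. (y i)\<^sup>2) (-F) \<le> e\<^sup>2 / (9 * (C + 1))"
  shows "\<bar>infsum (\<lambda>i. f i * y i) (-F)\<bar> < e/3"
proof -
  define t where "t = e / (3 * (C + 1))"
  have t: "t > 0" using e C by (simp add: t_def)
  have "\<bar>infsum (\<lambda>i. f i * y i) (-F)\<bar>
      \<le> t/2 * infsum (\<lambda>i. (f i)\<^sup>2) (-F) + 1/(2*t) * infsum (\<lambda>i. (y i)\<^sup>2) (-F)"
    by (rule l2_product_summable_and_bound(2)[OF f y t])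
  also have "\<dots> \<le> t/2 * C + 1/(2*t) * (e\<^sup>2 / (9 * (C + 1)))"
    using l2_sq_infsum_mono[OF f, of "-F"] f_bound y_tail t
    by (intro add_mono mult_left_mono) auto
  also have "\<dots> = e/6 * (C / (C + 1)) + e/6"
  proof -
    have "t/2 * C = e/6 * (C / (C + 1))" by (simp add: t_def)
    moreover have "1/(2*t) * (e\<^sup>2 / (9 * (C + 1))) = e/6"
      using C e by (simp add: t_def power2_eq_square divide_simps)
    ultimately show ?thesis by linarith
  qed
  also have "\<dots> < e/3"
    using C e by (simp add: field_simps)
  finally show ?thesis .
qed

lemma bounded_coordinates_convergent_subseq:
  fixes z :: "nat \<Rightarrow> 'l::countable \<Rightarrow> real"
  assumes bounded: "\<And>n i. \<bar>z n i\<bar> \<le> B"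
  shows "\<exists>r. strict_mono r \<and> (\<forall>i. convergent (\<lambda>n. z (r n) i))"
proof -
  interpret S: subseqs "\<lambda>k s. convergent (\<lambda>n. z (s n) (from_nat k))"
  proof
    fix k and s :: "nat \<Rightarrow> nat"
    have "bounded (range (\<lambda>n. z (s n) (from_nat k)))"
      by (rule boundedI[where B=B]) (use bounded in auto)
    then obtain l r where "strict_mono r" "((\<lambda>n. z (s n) (from_nat k)) \<circ> r) \<longlonglongrightarrow> l"
      using bounded_imp_convergent_subsequence by blast
    then show "\<exists>r'. strict_mono r' \<and> convergent (\<lambda>n. z ((s \<circ> r') n) (from_nat k))"
      by (auto simp: convergent_def o_def)
  qed
  have "convergent (\<lambda>n. z (S.diagseq n) i)" for i
  proof -
    have "convergent (\<lambda>n. z ((S.diagseq \<circ> (+) (Suc (to_nat i))) n) (from_nat (to_nat i)))"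
    proof (rule S.diagseq_holds)
      fix r s :: "nat \<Rightarrow> nat" and k
      assume "strict_mono r" "convergent (\<lambda>n. z (s n) (from_nat k))"
      then show "convergent (\<lambda>n. z ((s \<circ> r) n) (from_nat k))"
        using convergent_subseq_convergent[of "\<lambda>n. z (s n) (from_nat k)" r] by (simp add: o_def)
    qed
    then have "convergent (\<lambda>n. z (S.diagseq (n + Suc (to_nat i))) i)"
      by (simp add: o_def add.commute)
    then show ?thesis by (rule iffD1[OF convergent_ignore_initial_segment])
  qed
  then show ?thesis using S.subseq_diagseq by blast
qed

lemma l2_coordinatewise_limit:
  assumes z: "\<And>n. z n \<in> l2" and z_bound: "\<And>n. infsum (\<lambda>i. (z n i)\<^sup>2) UNIV \<le> C"
    and lim: "\<And>i. (\<lambda>n. z n i) \<longlonglongrightarrow> a i"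
  shows "a \<in> l2" and "infsum (\<lambda>i. (a i)\<^sup>2) UNIV \<le> C"
proof -
  have finite_sums: "sum (\<lambda>i. (a i)\<^sup>2) F \<le> C" if "finite F" for F
  proof (rule LIMSEQ_le_const2)
    show "(\<lambda>n. sum (\<lambda>i. (z n i)\<^sup>2) F) \<longlonglongrightarrow> sum (\<lambda>i. (a i)\<^sup>2) F"
      by (intro tendsto_intros lim)
    have "sum (\<lambda>i. (z n i)\<^sup>2) F \<le> C" for n
      using finite_sum_le_infsum[of "\<lambda>i. (z n i)\<^sup>2" UNIV F] that l2_sq_summable[OF z] z_bound[of n]
      by simp
    then show "\<exists>N. \<forall>n\<ge>N. sum (\<lambda>i. (z n i)\<^sup>2) F \<le> C" by blast
  qed
  have summable: "(\<lambda>i. (a i)\<^sup>2) summable_on UNIV"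
    by (rule nonneg_bdd_above_summable_on) (auto intro!: bdd_aboveI2[where M=C] finite_sums)
  then show "a \<in> l2" unfolding l2_def by simp
  show "infsum (\<lambda>i. (a i)\<^sup>2) UNIV \<le> C"
    by (rule infsum_le_finite_sums[OF summable]) (use finite_sums in auto)
qed

text \<open>
  The inner product with \<open>y\<close> is a finite sum of convergent terms plus a tail that is small
  uniformly in \<open>n\<close>, by the bound \<open>C\<close>.
\<close>

lemma l2_wconv_if_coordinatewise:
  assumes z: "\<And>n. z n \<in> l2" and z_bound: "\<And>n. infsum (\<lambda>i. (z n i)\<^sup>2) UNIV \<le> C"
    and lim: "\<And>i. (\<lambda>n. z n i) \<longlonglongrightarrow> a i"
  shows "l2_wconv z a"
proof -
  have a: "a \<in> l2" and a_bound: "infsum (\<lambda>i. (a i)\<^sup>2) UNIV \<le> C"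
    using l2_coordinatewise_limit[OF z z_bound lim] by auto
  have C: "C \<ge> 0" using z_bound[of 0] l2_sq_infsum_nonneg[of "z 0" UNIV] by linarith
  have "(\<lambda>n. l2_inner (z n) y) \<longlonglongrightarrow> l2_inner a y" if y: "y \<in> l2" for y
  proof (rule LIMSEQ_I)
    fix e :: real
    assume e: "e > 0"
    obtain F where F: "finite F" "infsum (\<lambda>i. (y i)\<^sup>2) (-F) \<le> e\<^sup>2 / (9 * (C + 1))"
      using l2_tail_small[OF y, of "e\<^sup>2 / (9 * (C + 1))"] e C by auto
    have finite_part: "(\<lambda>n. \<Sum>i\<in>F. z n i * y i) \<longlonglongrightarrow> (\<Sum>i\<in>F. a i * y i)"
      by (intro tendsto_intros lim)
    have "e/3 > 0" using e by simp
    then obtain N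
      where N: "\<And>n. n \<ge> N \<Longrightarrow> \<bar>(\<Sum>i\<in>F. z n i * y i) - (\<Sum>i\<in>F. a i * y i)\<bar> < e/3"
      using LIMSEQ_D[OF finite_part] unfolding real_norm_def by blast
    have "\<bar>l2_inner (z n) y - l2_inner a y\<bar> < e" if "n \<ge> N" for n
    proof -
      have "l2_inner (z n) y = (\<Sum>i\<in>F. z n i * y i) + infsum (\<lambda>i. z n i * y i) (-F)"
        and "l2_inner a y = (\<Sum>i\<in>F. a i * y i) + infsum (\<lambda>i. a i * y i) (-F)"
        unfolding l2_inner_def
        by (intro infsum_split_finite l2_product_summable_and_bound(1)[OF _ y zero_less_one] z a F(1))+
      moreover have "\<bar>infsum (\<lambda>i. z n i * y i) (-F)\<bar> < e/3"
        and "\<bar>infsum (\<lambda>i. a i * y i) (-F)\<bar> < e/3"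
        by (intro l2_inner_tail_less[OF _ y _ C e F(2)] z z_bound a a_bound)+
      ultimately show ?thesis using N[OF that] by linarith
    qed
    then show "\<exists>N. \<forall>n\<ge>N. norm (l2_inner (z n) y - l2_inner a y) < e" by auto
  qed
  then show ?thesis unfolding l2_wconv_def using z a by blast
qed

theorem l2_bounded_imp_wconv_subseq:
  fixes z :: "nat \<Rightarrow> 'l::countable \<Rightarrow> real"
  assumes z: "\<And>n. z n \<in> l2" and z_bound: "\<And>n. infsum (\<lambda>i. (z n i)\<^sup>2) UNIV \<le> C"
  shows "\<exists>r a. strict_mono r \<and> l2_wconv (\<lambda>n. z (r n)) a"
proof -
  have "\<bar>z n i\<bar> \<le> sqrt C" for n i
    using l2_coordinate_sq_le[OF z, of n i] z_bound[of n] real_le_rsqrt by fastforce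
  then obtain r where r: "strict_mono r" and conv: "\<And>i. convergent (\<lambda>n. z (r n) i)"
    using bounded_coordinates_convergent_subseq by blast
  have "l2_wconv (\<lambda>n. z (r n)) (\<lambda>i. lim (\<lambda>n. z (r n) i))"
    using z z_bound conv by (intro l2_wconv_if_coordinatewise) (auto simp: convergent_LIMSEQ_iff)
  then show ?thesis using r by blast
qed

lemma weakly_seq_cont_dec_bounded:
  fixes D :: "('l::countable \<Rightarrow> real) \<Rightarrow> 'x::{real_inner,complete_space}"
  assumes D: "weakly_seq_cont_dec D" and z: "\<And>n. z n \<in> l2"
    and z_bound: "\<And>n. l2_norm (z n) \<le> B"
  shows "\<exists>B'. \<forall>n. norm (D (z n)) \<le> B'"
proof (rule ccontr)
  assume "\<not> ?thesis"
  then have "\<forall>k::nat. \<exists>n. norm (D (z n)) > real k" by (meson not_le)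
  then obtain s where s: "\<And>k::nat. norm (D (z (s k))) > real k" by metis
  obtain r a where r: "strict_mono r" and "l2_wconv (\<lambda>n. z (s (r n))) a"
    using l2_bounded_imp_wconv_subseq[of "\<lambda>n. z (s n)" "B\<^sup>2"] z z_bound
      l2_norm_le_imp_sq_infsum_le by blast
  then have "hwconv (\<lambda>n. D (z (s (r n)))) (D a)"
    using D unfolding weakly_seq_cont_dec_def by blast
  then obtain B' where B': "\<And>n. norm (D (z (s (r n)))) \<le> B'" using hwconv_imp_bounded by blast
  obtain n :: nat where "B' \<le> real n" using real_arch_simple by blast
  moreover have "n \<le> r n" using seq_suble[OF r] .
  ultimately show False using s[of "r n"] B'[of n] by linarith
qed

lemma aNETT_reg_coercive:
  fixes E :: "'x::{real_inner,complete_space} \<Rightarrow> ('l::countable \<Rightarrow> real)"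
  assumes E: "\<And>x. E x \<in> l2" and D: "weakly_seq_cont_dec D" and \<psi>: "coercive_l2 \<psi>"
    and c: "c > 0"
  shows "coercive (aNETT_reg \<psi> E D c)"
  unfolding coercive_def
proof (intro allI impI)
  fix xs :: "nat \<Rightarrow> 'x"
  assume "\<exists>M. \<forall>n. aNETT_reg \<psi> E D c (xs n) \<le> ennreal M"
  then obtain M0 where M0: "\<And>n. aNETT_reg \<psi> E D c (xs n) \<le> ennreal M0" by blast
  define M where "M = max M0 0"
  have M: "\<And>n. aNETT_reg \<psi> E D c (xs n) \<le> ennreal M" "M \<ge> 0"
    using order.trans[OF M0 ennreal_leI[OF max.cobounded1]] by (auto simp: M_def)
  have "\<psi> (E (xs n)) \<le> ennreal M" for n
    using order.trans[OF add_increasing2[OF zero_le order_refl] M(1)[of n, unfolded aNETT_reg_def]] .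
  then obtain B1 where "\<And>n. l2_norm (E (xs n)) \<le> B1"
    using \<psi>[unfolded coercive_l2_def, rule_format, of "\<lambda>n. E (xs n)"] E by blast
  then obtain B2 where B2: "\<And>n. norm (D (E (xs n))) \<le> B2"
    using weakly_seq_cont_dec_bounded[OF D E] by blast
  have residual: "norm (xs n - D (E (xs n))) \<le> sqrt (2 * M / c)" for n
  proof -
    have "ennreal (c / 2 * (norm (xs n - D (E (xs n))))\<^sup>2) \<le> ennreal M"
      using order.trans[OF add_increasing[OF zero_le order_refl] M(1)[of n, unfolded aNETT_reg_def]] .
    then have "(norm (xs n - D (E (xs n))))\<^sup>2 \<le> 2 * M / c"
      using M(2) c by (simp add: field_simps)
    then show ?thesis using real_le_rsqrt by blast
  qed
  have "norm (xs n) \<le> sqrt (2 * M / c) + B2" for n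
    using norm_triangle_ineq[of "xs n - D (E (xs n))" "D (E (xs n))"] residual[of n] B2[of n]
    by simp
  then show "\<exists>B. \<forall>n. norm (xs n) \<le> B" by blast
qed

theorem mainTheorem1:
  fixes K :: "'x::{real_inner,complete_space} \<Rightarrow> 'y::{real_inner,complete_space}"
    and E :: "'x \<Rightarrow> ('l::countable \<Rightarrow> real)"
    and D :: "('l \<Rightarrow> real) \<Rightarrow> 'x"
    and \<psi> :: "('l \<Rightarrow> real) \<Rightarrow> ennreal"
    and c :: real
  assumes A3: "weakly_seq_cont K"
    and A4: "weakly_seq_cont_enc E"
    and A5: "weakly_seq_cont_dec D"
    and A6: "coercive_l2 \<psi>" "weakly_seq_lsc_l2 \<psi>"
    and c_pos: "c > 0"
  shows "coercive (aNETT_reg \<psi> E D c)"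
proof (rule aNETT_reg_coercive[OF _ A5 A6(1) c_pos])
  show "\<And>x. E x \<in> l2" using A4 unfolding weakly_seq_cont_enc_def by blast
qed

end
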